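(* Let $\mathcal T$ be a triangulation of type I of the punctured disc, with associated cluster-tilted algebra $\mathrm B$, and with colored points labelled $r_1,\dots,r_{m+d}$ and $b_1,\dots,b_{m+d}$ as described in the context. Let $i\in\{1,\dots,m+d\}$ (indices modulo $m+d$). Then (a) $M(r_i,b_{i+1})$ is projective (possibly zero); (b) $M(r_i,b_i)$ is projective (possibly zero), or there exists an arc $\overline{k}=\gamma(q,s)$ of $\mathcal T$ (the side opposite the puncture of an internal triangle of $\mathcal T$ whose two other sides $k,k+1$ are incident to the puncture) such that $M(r_i,b_i)=M_{\gamma(q,\tau^{-1}(s))}$.
   Context: Let $D$ be a disc with $n$ marked points on the boundary and one puncture in the interior; $\mathcal T$ is a triangulation of $D$ by tagged arcs (a maximal set of pairwise compatible tagged arcs). An arc incident to the puncture gives two tagged arcs, plain and notched ($\alpha$ and $\alpha^{\Join}$). For a boundary marked point $q$, $\tau(q)$ is the next marked point in clockwise direction. For boundary marked points $q\neq s$ with $s\ne\tau(q)$, $\gamma(q,s)$ denotes the arc from $q$ to $s$ going around the puncture in clockwise direction, i.e. isotopic (in $D$ minus the puncture) to the clockwise boundary path from $q$ to $s$; if $s=\tau(q)$ this is a boundary segment. $\gamma(q,q)$ and $\gamma^{\Join}(q,q)$ denote the plain and notched arcs from $q$ to the puncture. Let $\mathcal C$ be the cluster category of type $\mathbb D_n$, whose indecomposable objects $X_\gamma$ correspond bijectively to tagged arcs $\gamma$, with Auslander–Reiten translation $\tau X_\gamma=X_{\tau(\gamma)}$ where $\tau(\gamma)$ is obtained by moving both endpoints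 on the boundary to their clockwise neighbours and changing the tag at the puncture. Let $T=\bigoplus_{a\in\mathcal T}T_a$ with $T_a=\tau^{-1}X_a$, a cluster-tilting object, and $\mathrm B=\mathrm{End}_{\mathcal C}(T)$, the cluster-tilted algebra; its vertices are indexed by arcs of $\mathcal T$. For a tagged arc $\gamma$ let $M_\gamma=\mathrm{Hom}_{\mathcal C}(T,X_\gamma)$; this is $0$ if $\gamma\in\mathcal T$ and indecomposable otherwise, and $M_{\tau^{-1}(a)}=P(a)$, $M_{\tau(a)}=I(a)$ for $a\in\mathcal T$; $\tau$ on modules is the AR translation of $\mathrm{mod}\,\mathrm B$. Two arcs incident to the puncture are consecutive if their boundary endpoints are $q$ and $\tau(q)$. $\mathcal T$ is of type I if it contains at least three tagged arcs incident to the puncture, or two plain non-consecutive arcs incident to the puncture. A boundary point is adjacent to the puncture if it is an endpoint of an arc of $\mathcal T$ incident to the puncture. Label the $m$ arcs of $\mathcal T$ incident to the puncture $1,\dots,m$ in clockwise order (indices mod $m$). A triangle of $\mathcal T$ is internal if none of its sides is a boundary segment. If arcs $k,k+1$ are two sides of an internal triangle $\Delta$, its third side is labelled $\overline{k}$; the first vertex of $\Delta$ is the boundary endpoint of $k$ and its last vertex the boundary endpoint of $k+1$. Let $\mathcal E$ be the set of internal triangles having the puncture as a vertex; two are consecutive if they share an edge. If all triangles at the puncture are internal, set $d=m$. Otherwise decompose $\mathcal E=\mathcal E_1\cup\dots\cup\mathcal E_l$ into maximal sets $\mathcal E_i=\{\Delta^i_1,\dots,\Delta^i_{t_i}\}$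 of consecutive triangles, where $\Delta^i_{j+1}$ follows $\Delta^i_j$ in clockwise order (so $\Delta^i_1$ is the first and $\Delta^i_{t_i}$ the last triangle of $\mathcal E_i$), and set $d=\sum_i(|\mathcal E_i|-1)$ ($d=0$ if $\mathcal E=\emptyset$). A boundary marked point $q$ is colored if $q$ or $\tau(q)$ is adjacent to the puncture. A colored point $q$ is red if $\tau(q)$ is not the last vertex of the last triangle of some $\mathcal E_i$, and blue if $q$ is not the first vertex of the first triangle of some $\mathcal E_i$. There are $m+d$ red and $m+d$ blue points. Labels $r_1,\dots,r_{m+d}$ are assigned to red points and $b_1,\dots,b_{m+d}$ to blue points, each following the clockwise order along the boundary, starting as follows: (1) if $\mathcal E=\emptyset$, an arbitrary red-and-blue point gets labels $r_1$ and $b_1$; (2) if all triangles at the puncture are internal, an arbitrary red-and-blue point gets labels $r_1$ and $b_{m+d}$; (3) otherwise, with $q$ the first vertex of the first triangle of $\mathcal E_1$, the point $\tau^{-1}(q)$ gets labels $r_1,b_1$ and $q$ gets label $r_2$. Indices of $r,b$ are taken modulo $m+d$. For labels $r_i,b_j$: if they lie on different points $q$ (labelled $r_i$) and $s$ (labelled $b_j$), $M(r_i,b_j)=M_{\gamma(q,s)}$ if $\gamma(q,s)$ is an arc not in $\mathcal T$, and $M(r_i,b_j)=0$ otherwise (in particular if $\gamma(q,s)\in\mathcal T$ or is a boundary segment); if they lie on the same point $q$, then $M(r_i,b_j)=M_{\gamma^{\Join}(q,q)}$ if $\gamma(q,q)\in\mathcal T$, and $M(r_i,b_j)=M_{\gamma(q,q)}$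 otherwise. *)

theory Defs
  imports Main
begin

text \<open>Combinatorial model of the once-punctured disc with n boundary marked
points 0,...,n-1, numbered in clockwise order.  tau q is the clockwise
neighbour of q.\<close>

definition cw :: "nat \<Rightarrow> nat \<Rightarrow> nat" where
  "cw n q = (q + 1) mod n"

definition ccw :: "nat \<Rightarrow> nat \<Rightarrow> nat" where
  "ccw n q = (q + n - 1) mod n"

definition cwlen :: "nat \<Rightarrow> nat \<Rightarrow> nat \<Rightarrow> nat" where
  "cwlen n q s = (s + n - q) mod n"

text \<open>Tagged arcs: Bd q s is gamma(q,s) (the arc from q to s isotopic to the
clockwise boundary path from q to s); Pl q / Nt q are the plain / notched arcs
from q to the puncture.\<close>
datatype tarc = Bd nat nat | Pl nat | Nt nat

fun valid_arc :: "nat \<Rightarrow> tarc \<Rightarrow> bool" where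
  "valid_arc n (Bd q s) = (q < n \<and> s < n \<and> q \<noteq> s \<and> s \<noteq> cw n q)"
| "valid_arc n (Pl q) = (q < n)"
| "valid_arc n (Nt q) = (q < n)"

fun tau_arc :: "nat \<Rightarrow> tarc \<Rightarrow> tarc" where
  "tau_arc n (Bd q s) = Bd (cw n q) (cw n s)"
| "tau_arc n (Pl q) = Nt (cw n q)"
| "tau_arc n (Nt q) = Pl (cw n q)"

fun tau_inv_arc :: "nat \<Rightarrow> tarc \<Rightarrow> tarc" where
  "tau_inv_arc n (Bd q s) = Bd (ccw n q) (ccw n s)"
| "tau_inv_arc n (Pl q) = Nt (ccw n q)"
| "tau_inv_arc n (Nt q) = Pl (ccw n q)"

text \<open>Compatibility (non-crossing) of two arcs between boundary points:
the puncture-free sides (clockwise boundary intervals) are nested or have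
disjoint interiors.\<close>
definition bd_compat :: "nat \<Rightarrow> nat \<Rightarrow> nat \<Rightarrow> nat \<Rightarrow> nat \<Rightarrow> bool" where
  "bd_compat n q s q' s' =
     (cwlen n q' q + cwlen n q s \<le> cwlen n q' s'
      \<or> cwlen n q q' + cwlen n q' s' \<le> cwlen n q s
      \<or> (cwlen n q q' \<ge> cwlen n q s \<and> cwlen n q' q \<ge> cwlen n q' s'))"

text \<open>An arc from p to the puncture does not cross gamma(q,s) iff p is not
strictly inside the clockwise interval from q to s.\<close>
definition punct_compat :: "nat \<Rightarrow> nat \<Rightarrow> nat \<Rightarrow> nat \<Rightarrow> bool" where
  "punct_compat n p q s = (\<not> (0 < cwlen n q p \<and> cwlen n q p < cwlen n q s))"

fun compat :: "nat \<Rightarrow> tarc \<Rightarrow> tarc \<Rightarrow> bool" where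
  "compat n (Bd q s) (Bd q' s') = bd_compat n q s q' s'"
| "compat n (Bd q s) (Pl p) = punct_compat n p q s"
| "compat n (Bd q s) (Nt p) = punct_compat n p q s"
| "compat n (Pl p) (Bd q s) = punct_compat n p q s"
| "compat n (Nt p) (Bd q s) = punct_compat n p q s"
| "compat n (Pl p) (Pl p') = True"
| "compat n (Nt p) (Nt p') = True"
| "compat n (Pl p) (Nt p') = (p = p')"
| "compat n (Nt p) (Pl p') = (p = p')"

definition triangulation :: "nat \<Rightarrow> tarc set \<Rightarrow> bool" where
  "triangulation n T =
     ((\<forall>x\<in>T. valid_arc n x) \<and> (\<forall>x\<in>T. \<forall>y\<in>T. compat n x y)
      \<and> (\<forall>x. valid_arc n x \<and> (\<forall>y\<in>T. compat n x y) \<longrightarrow> x \<in> T))"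

fun is_punct :: "tarc \<Rightarrow> bool" where
  "is_punct (Bd q s) = False"
| "is_punct (Pl q) = True"
| "is_punct (Nt q) = True"

definition typeI :: "nat \<Rightarrow> tarc set \<Rightarrow> bool" where
  "typeI n T =
     (card {x\<in>T. is_punct x} \<ge> 3
      \<or> (\<exists>q q'. Pl q \<in> T \<and> Pl q' \<in> T \<and> q \<noteq> q' \<and> q' \<noteq> cw n q \<and> q \<noteq> cw n q'))"

definition adj :: "tarc set \<Rightarrow> nat set" where
  "adj T = {q. Pl q \<in> T \<or> Nt q \<in> T}"

definition cw_next :: "nat \<Rightarrow> nat set \<Rightarrow> nat \<Rightarrow> nat" where
  "cw_next n S p = (p + (LEAST k. 0 < k \<and> (p + k) mod n \<in> S)) mod n"

definition cw_prev :: "nat \<Rightarrow> nat set \<Rightarrow> nat \<Rightarrow> nat" where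
  "cw_prev n S p = (p + n - (LEAST k. 0 < k \<and> k \<le> n \<and> (p + n - k) mod n \<in> S)) mod n"

text \<open>Internal triangles at the puncture, indexed by their first vertex p
(the boundary endpoint of arc k; the last vertex is cw_next n (adj T) p).\<close>
definition intE :: "nat \<Rightarrow> tarc set \<Rightarrow> nat set" where
  "intE n T = {p \<in> adj T. cw_next n (adj T) p \<noteq> cw n p}"

text \<open>First vertices of first triangles of the maximal runs E_i.\<close>
definition run_starts :: "nat \<Rightarrow> tarc set \<Rightarrow> nat set" where
  "run_starts n T = {p \<in> intE n T. cw_prev n (adj T) p \<notin> intE n T}"

text \<open>Last vertices of last triangles of the maximal runs E_i.\<close>
definition run_last_vertices :: "nat \<Rightarrow> tarc set \<Rightarrow> nat set" where
  "run_last_vertices n T =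
     {cw_next n (adj T) p | p. p \<in> intE n T \<and> cw_next n (adj T) p \<notin> intE n T}"

definition dval :: "nat \<Rightarrow> tarc set \<Rightarrow> nat" where
  "dval n T = (if intE n T = adj T then card (adj T)
               else card (intE n T) - card (run_starts n T))"

definition NN :: "nat \<Rightarrow> tarc set \<Rightarrow> nat" where
  "NN n T = card (adj T) + dval n T"

definition colored :: "nat \<Rightarrow> tarc set \<Rightarrow> nat set" where
  "colored n T = {q. q < n \<and> (q \<in> adj T \<or> cw n q \<in> adj T)}"

definition red :: "nat \<Rightarrow> tarc set \<Rightarrow> nat set" where
  "red n T = {q \<in> colored n T. cw n q \<notin> run_last_vertices n T}"

definition blue :: "nat \<Rightarrow> tarc set \<Rightarrow> nat set" where
  "blue n T = {q \<in> colored n T. q \<notin> run_starts n T}"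

text \<open>Labelling: rl j is the point carrying label r_j, bl j the point
carrying b_j (j in 1..m+d), following the clockwise order from the
prescribed starting labels.\<close>
definition labelling :: "nat \<Rightarrow> tarc set \<Rightarrow> (nat \<Rightarrow> nat) \<Rightarrow> (nat \<Rightarrow> nat) \<Rightarrow> bool" where
  "labelling n T rl bl =
     (let N = NN n T; R = red n T; B = blue n T in
      \<exists>rs bs kb.
        (\<forall>j\<in>{1..N}. rl j = (cw_next n R ^^ ((j + N - 1) mod N)) rs
                   \<and> bl j = (cw_next n B ^^ ((j + N - kb) mod N)) bs)
        \<and> (if intE n T = {} then rs = bs \<and> rs \<in> R \<inter> B \<and> kb = 1
           else if intE n T = adj T then rs = bs \<and> rs \<in> R \<inter> B \<and> kb = N
           else (\<exists>q\<in>run_starts n T. rs = ccw n q \<and> bs = ccw n q \<and> kb = 1)))"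

text \<open>Modules M_gamma = Hom(T, X_gamma): None is the zero module, Some gamma
the indecomposable M_gamma (gamma not in T).\<close>
definition Mmod :: "tarc set \<Rightarrow> tarc \<Rightarrow> tarc option" where
  "Mmod T \<gamma> = (if \<gamma> \<in> T then None else Some \<gamma>)"

definition Mrb :: "nat \<Rightarrow> tarc set \<Rightarrow> (nat \<Rightarrow> nat) \<Rightarrow> (nat \<Rightarrow> nat) \<Rightarrow> nat \<Rightarrow> nat \<Rightarrow> tarc option" where
  "Mrb n T rl bl i j =
     (let q = rl i; s = bl j in
      if q \<noteq> s then (if s = cw n q then None else Mmod T (Bd q s))
      else (if Pl q \<in> T then Mmod T (Nt q) else Mmod T (Pl q)))"

text \<open>Projective (possibly zero): zero, or isomorphic to an indecomposable
projective P(a) = M_{tau^{-1}(a)}, a in T.\<close>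
definition projective_mod :: "nat \<Rightarrow> tarc set \<Rightarrow> tarc option \<Rightarrow> bool" where
  "projective_mod n T M = (M = None \<or> (\<exists>a\<in>T. M = Mmod T (tau_inv_arc n a) \<and> M \<noteq> None))"

end

theory Submission
  imports Defs
begin

text \<open>Both families of labels follow the clockwise order, so they are governed by the clockwise
  successor maps on red and on blue points.  Send a red point x to its blue mate: x itself if x
  and cw x are both adjacent to the puncture, the point just before the next adjacent point if x
  is the first vertex of an internal triangle, and cw x otherwise.  This map conjugates the red
  successor into the blue successor, the starting labels put r_1 and b_1 on mates, and there are
  exactly m + d blue points; hence b_i always sits on the mate of the point labelled r_i.  The
  lemma is then a local check at a red point x: M(x, mate x) is zero, P(a) for the arc a at cw x
  (which carries the same tag as the arc at x), or M of gamma(q, tau^-1 s) for the side gamma(q, s)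
  of an internal triangle; and M(x, next blue point) is zero, or tau^-1 of an arc of T, namely of
  the puncture-free side of an internal triangle.\<close>

section \<open>Clockwise arithmetic on the boundary\<close>

lemma cw_ccw: "q < n \<Longrightarrow> cw n (ccw n q) = q"
  by (cases q) (auto simp: cw_def ccw_def mod_Suc_eq)

lemma ccw_cw: "q < n \<Longrightarrow> ccw n (cw n q) = q"
  by (cases "Suc q = n") (auto simp: cw_def ccw_def)

lemma ccw_inj: "x < n \<Longrightarrow> y < n \<Longrightarrow> ccw n x = ccw n y \<Longrightarrow> x = y"
  by (metis cw_ccw)

lemma cw_mod: "0 < n \<Longrightarrow> cw n (x mod n) = (x + 1) mod n"
  by (simp add: cw_def mod_Suc_eq)

lemma cw_neq: "2 \<le> n \<Longrightarrow> q < n \<Longrightarrow> cw n q \<noteq> q"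
  by (cases "Suc q = n") (auto simp: cw_def)

lemma mod_add_diff_eq: "j \<le> (n::nat) \<Longrightarrow> (x mod n + n - j) mod n = (x + (n - j)) mod n"
  by (metis Nat.add_diff_assoc mod_add_left_eq)

lemma add_diff_1_mod: "1 \<le> j \<Longrightarrow> (j + N - 1) mod N = (j - 1) mod (N::nat)"
  by (metis Nat.add_diff_assoc2 mod_add_self2)

lemma cwlen_less: "0 < n \<Longrightarrow> cwlen n p q < n"
  by (simp add: cwlen_def)

lemma cwlen_if: "x < n \<Longrightarrow> y < n \<Longrightarrow> cwlen n x y = (if x \<le> y then y - x else y + n - x)"
  by (auto simp: cwlen_def mod_if)

lemma add_cwlen_mod: "p < n \<Longrightarrow> q < n \<Longrightarrow> (p + cwlen n p q) mod n = q"
  by (auto simp: cwlen_if mod_if)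

lemma cwlen_add_mod: "p < n \<Longrightarrow> d < n \<Longrightarrow> cwlen n p ((p + d) mod n) = d"
  by (auto simp: cwlen_if mod_if)

lemma cwlen_eq_0_iff: "p < n \<Longrightarrow> q < n \<Longrightarrow> cwlen n p q = 0 \<longleftrightarrow> p = q"
  by (auto simp: cwlen_if)

lemma cwlen_via:
  "a < n \<Longrightarrow> b < n \<Longrightarrow> q < n \<Longrightarrow> cwlen n a b =
     (if cwlen n q a \<le> cwlen n q b then cwlen n q b - cwlen n q a else cwlen n q b + n - cwlen n q a)"
  by (cases "q \<le> a"; cases "q \<le> b"; cases "a \<le> b") (simp_all add: cwlen_if)

lemma cwlen_swap:
  "a < n \<Longrightarrow> q < n \<Longrightarrow> cwlen n a q = (if cwlen n q a = 0 then 0 else n - cwlen n q a)"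
  by (cases "q \<le> a"; cases "a \<le> q") (simp_all add: cwlen_if)

text \<open>Measuring all clockwise distances from q turns this into linear arithmetic.\<close>

lemma bd_compat_if_punct_compat:
  assumes "a < n" "b < n" "q < n" "s < n" "a \<noteq> b" "q \<noteq> s"
    and "punct_compat n a q s" "punct_compat n b q s"
  shows "bd_compat n a b q s"
proof -
  have "cwlen n q a \<noteq> cwlen n q b"
    using add_cwlen_mod[of q n a] add_cwlen_mod[of q n b] assms by metis
  moreover have "0 < cwlen n q s" "cwlen n q s < n" "cwlen n q a < n" "cwlen n q b < n"
    using cwlen_eq_0_iff[of q n s] cwlen_less[of n] assms by auto
  ultimately show ?thesis
    using assms cwlen_via[of a n b q] cwlen_swap[of a n q]
    unfolding bd_compat_def punct_compat_def
    by (cases "cwlen n q a \<le> cwlen n q b"; cases "cwlen n q a = 0") auto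
qed

section \<open>The clockwise successor in a set of boundary points\<close>

lemma cw_next_witness:
  fixes n :: nat
  assumes "S \<subseteq> {..<n}" "s \<in> S" "p < n"
  obtains k where "0 < k" "k \<le> n" "(p + k) mod n \<in> S"
proof -
  have s: "s < n" using assms by auto
  show ?thesis
  proof (cases "p = s")
    case True
    then show ?thesis by (intro that[of n]) (use s assms(2) in simp_all)
  next
    case False
    then show ?thesis
      using that[of "cwlen n p s"] assms s cwlen_eq_0_iff[of p n s] cwlen_less[of n p s]
        add_cwlen_mod[of p n s] by auto
  qed
qed

lemma cw_prev_witness:
  fixes n :: nat
  assumes "S \<subseteq> {..<n}" "s \<in> S" "p < n"
  obtains k where "0 < k" "k \<le> n" "(p + n - k) mod n \<in> S"
proof -
  have s: "s < n" using assms by auto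
  show ?thesis
  proof (cases "p = s")
    case True
    then show ?thesis by (intro that[of n]) (use s assms(2) in simp_all)
  next
    case False
    have "(p + n - cwlen n s p) mod n = s"
      using assms(3) s by (cases "s \<le> p") (simp_all add: cwlen_if)
    then show ?thesis
      using that[of "cwlen n s p"] False assms s cwlen_eq_0_iff[of s n p] cwlen_less[of n s p] by auto
  qed
qed

lemma cw_next_least:
  assumes "S \<subseteq> {..<n}" "s \<in> S" "p < n"
  defines "k \<equiv> LEAST k. 0 < k \<and> (p + k) mod n \<in> S"
  shows "0 < k" "k \<le> n" "(p + k) mod n \<in> S" "\<And>j. 0 < j \<Longrightarrow> j < k \<Longrightarrow> (p + j) mod n \<notin> S"
    and "cw_next n S p = (p + k) mod n"
proof -
  obtain w where w: "0 < w" "w \<le> n" "(p + w) mod n \<in> S"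
    using cw_next_witness[OF assms(1-3)] .
  show "0 < k" "(p + k) mod n \<in> S"
    unfolding k_def using LeastI[of "\<lambda>k. 0 < k \<and> (p + k) mod n \<in> S", OF conjI[OF w(1,3)]] by auto
  have "k \<le> w" unfolding k_def by (rule Least_le) (use w in blast)
  then show "k \<le> n" using w(2) by simp
  show "\<And>j. 0 < j \<Longrightarrow> j < k \<Longrightarrow> (p + j) mod n \<notin> S"
    unfolding k_def using not_less_Least by blast
  show "cw_next n S p = (p + k) mod n" unfolding cw_next_def k_def ..
qed

lemma cw_next_eqI:
  assumes "0 < k" "(p + k) mod n \<in> S" "\<And>j. 0 < j \<Longrightarrow> j < k \<Longrightarrow> (p + j) mod n \<notin> S"
  shows "cw_next n S p = (p + k) mod n"
proof -
  have "(LEAST k. 0 < k \<and> (p + k) mod n \<in> S) = k"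
    by (rule Least_equality) (use assms in \<open>auto simp: not_less[symmetric]\<close>)
  then show ?thesis unfolding cw_next_def by simp
qed

lemma cw_prev_least:
  assumes "S \<subseteq> {..<n}" "s \<in> S" "p < n"
  defines "k \<equiv> LEAST k. 0 < k \<and> k \<le> n \<and> (p + n - k) mod n \<in> S"
  shows "0 < k" "k \<le> n" "(p + n - k) mod n \<in> S"
    and "\<And>j. 0 < j \<Longrightarrow> j < k \<Longrightarrow> (p + n - j) mod n \<notin> S"
    and "cw_prev n S p = (p + n - k) mod n"
proof -
  obtain w where "0 < w" "w \<le> n" "(p + n - w) mod n \<in> S"
    using cw_prev_witness[OF assms(1-3)] .
  then have w: "0 < w \<and> w \<le> n \<and> (p + n - w) mod n \<in> S" by blast
  show k: "0 < k" "k \<le> n" "(p + n - k) mod n \<in> S"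
    unfolding k_def using LeastI[of "\<lambda>k. 0 < k \<and> k \<le> n \<and> (p + n - k) mod n \<in> S", OF w] by auto
  show "(p + n - j) mod n \<notin> S" if "0 < j" "j < k" for j
  proof -
    have "\<not> (0 < j \<and> j \<le> n \<and> (p + n - j) mod n \<in> S)"
      using that(2) unfolding k_def by (rule not_less_Least)
    then show ?thesis using that k(2) by simp
  qed
  show "cw_prev n S p = (p + n - k) mod n" unfolding cw_prev_def k_def ..
qed

lemma cw_prev_eqI:
  assumes "0 < k" "k \<le> n" "(p + n - k) mod n \<in> S"
    and "\<And>j. 0 < j \<Longrightarrow> j < k \<Longrightarrow> (p + n - j) mod n \<notin> S"
  shows "cw_prev n S p = (p + n - k) mod n"
proof -
  have "(LEAST k. 0 < k \<and> k \<le> n \<and> (p + n - k) mod n \<in> S) = k"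
    by (rule Least_equality) (use assms in \<open>auto simp: not_less[symmetric]\<close>)
  then show ?thesis unfolding cw_prev_def by simp
qed

lemma cw_next_in: "S \<subseteq> {..<n} \<Longrightarrow> s \<in> S \<Longrightarrow> p < n \<Longrightarrow> cw_next n S p \<in> S"
  using cw_next_least by simp

lemma cw_prev_in: "S \<subseteq> {..<n} \<Longrightarrow> s \<in> S \<Longrightarrow> p < n \<Longrightarrow> cw_prev n S p \<in> S"
  using cw_prev_least by simp

lemma cw_prev_cw_next:
  assumes S: "S \<subseteq> {..<n}" and a: "a \<in> S"
  shows "cw_prev n S (cw_next n S a) = a"
proof -
  have an: "a < n" using S a by auto
  define k where "k = (LEAST k. 0 < k \<and> (a + k) mod n \<in> S)"
  note step_a = cw_next_least[OF S a an, folded k_def]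
  have shift: "((a + k) mod n + n - j) mod n = (a + (k - j)) mod n" if "j \<le> k" for j
  proof -
    have "((a + k) mod n + n - j) mod n = (a + k + (n - j)) mod n"
      using that step_a(2) by (intro mod_add_diff_eq) simp
    also have "a + k + (n - j) = a + (k - j) + n" using that step_a(2) by simp
    finally show ?thesis by simp
  qed
  have "cw_prev n S ((a + k) mod n) = ((a + k) mod n + n - k) mod n"
  proof (rule cw_prev_eqI)
    show "0 < k" "k \<le> n" using step_a by auto
    show "((a + k) mod n + n - k) mod n \<in> S" using shift[of k] an a by simp
    show "((a + k) mod n + n - j) mod n \<notin> S" if "0 < j" "j < k" for j
      using that shift[of j] step_a(4)[of "k - j"] by simp
  qed
  then show ?thesis using step_a(5) shift[of k] an by simp
qed

lemma cw_next_cw_prev: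
  assumes S: "S \<subseteq> {..<n}" and b: "b \<in> S"
  shows "cw_next n S (cw_prev n S b) = b"
proof -
  have bn: "b < n" using S b by auto
  define k where "k = (LEAST k. 0 < k \<and> k \<le> n \<and> (b + n - k) mod n \<in> S)"
  note step_b = cw_prev_least[OF S b bn, folded k_def]
  have fwd: "((b + n - k) mod n + j) mod n = (b + n - (k - j)) mod n" if "j \<le> k" for j
  proof -
    have "b + n - k + j = b + n - (k - j)" using that step_b(2) by simp
    then show ?thesis by (simp add: mod_add_left_eq)
  qed
  have "cw_next n S ((b + n - k) mod n) = ((b + n - k) mod n + k) mod n"
  proof (rule cw_next_eqI)
    show "0 < k" using step_b by auto
    show "((b + n - k) mod n + k) mod n \<in> S" using fwd[of k] b bn by simp
    show "((b + n - k) mod n + j) mod n \<notin> S" if "0 < j" "j < k" for j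
      using that fwd[of j] step_b(4)[of "k - j"] by simp
  qed
  then show ?thesis using step_b(5) fwd[of k] bn by simp
qed

lemma cw_next_inj:
  "S \<subseteq> {..<n} \<Longrightarrow> a \<in> S \<Longrightarrow> b \<in> S \<Longrightarrow> cw_next n S a = cw_next n S b \<Longrightarrow> a = b"
  by (metis cw_prev_cw_next)

lemma funpow_cw_next_in: "S \<subseteq> {..<n} \<Longrightarrow> x \<in> S \<Longrightarrow> (cw_next n S ^^ k) x \<in> S"
  by (induction k) (auto intro: cw_next_in)

lemma funpow_cw_next_inj:
  assumes "S \<subseteq> {..<n}" "x \<in> S" "y \<in> S" "(cw_next n S ^^ k) x = (cw_next n S ^^ k) y"
  shows "x = y"
  using assms(4)
  by (induction k) (auto dest: cw_next_inj[OF assms(1) funpow_cw_next_in[OF assms(1,2)]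
        funpow_cw_next_in[OF assms(1,3)]])

text \<open>Walking backwards from s with cw_prev strictly decreases the clockwise distance from x.\<close>

lemma funpow_cw_next_onto:
  assumes S: "S \<subseteq> {..<n}" and x: "x \<in> S"
  shows "s \<in> S \<Longrightarrow> \<exists>j. (cw_next n S ^^ j) x = s"
proof (induction "cwlen n x s" arbitrary: s rule: less_induct)
  case less
  have xn: "x < n" and sn: "s < n" using S x less.prems by auto
  show ?case
  proof (cases "s = x")
    case True then show ?thesis by (intro exI[of _ 0]) simp
  next
    case False
    define d where "d = cwlen n x s"
    have d: "0 < d" "d < n" "(x + d) mod n = s"
      using cwlen_eq_0_iff[OF xn sn] cwlen_less[of n x s] add_cwlen_mod[OF xn sn] False xn
      unfolding d_def by auto
    define k where "k = (LEAST k. 0 < k \<and> k \<le> n \<and> (s + n - k) mod n \<in> S)"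
    note step_s = cw_prev_least[OF S less.prems sn, folded k_def]
    have shift: "(s + n - j) mod n = (x + (d - j)) mod n" if "j \<le> d" for j
    proof -
      have "(s + n - j) mod n = (x + d + (n - j)) mod n"
        using that d by (metis mod_add_diff_eq order.strict_implies_order order_trans)
      also have "x + d + (n - j) = x + (d - j) + n" using that d by simp
      finally show ?thesis by simp
    qed
    have "k \<le> d"
      using step_s(4)[of d] shift[of d] d(1) x xn by (cases "k \<le> d") auto
    then have "cwlen n x (cw_prev n S s) < cwlen n x s"
      using step_s(1,5) shift cwlen_add_mod[OF xn, of "d - k"] d unfolding d_def by simp
    then obtain j where "(cw_next n S ^^ j) x = cw_prev n S s"
      using less.hyps cw_prev_in[OF S less.prems sn] by blast
    then have "(cw_next n S ^^ Suc j) x = s" using cw_next_cw_prev[OF S less.prems] by simp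
    then show ?thesis by blast
  qed
qed

lemma funpow_cw_next_card:
  assumes S: "S \<subseteq> {..<n}" and x: "x \<in> S"
  shows "(cw_next n S ^^ card S) x = x"
proof -
  let ?f = "cw_next n S"
  let ?orb = "\<lambda>j. (?f ^^ j) x"
  have fin: "finite S" using S finite_subset by blast
  have "\<not> inj_on ?orb {..card S}"
  proof
    assume inj: "inj_on ?orb {..card S}"
    have "?orb ` {..card S} \<subseteq> S" using funpow_cw_next_in[OF S x] by blast
    then have "card (?orb ` {..card S}) \<le> card S" by (rule card_mono[OF fin])
    then show False unfolding card_image[OF inj] by simp
  qed
  then obtain i j where ij: "i < j" "j \<le> card S" "?orb i = ?orb j"
    unfolding inj_on_def by (metis atMost_iff linorder_neqE_nat)
  define p where "p = j - i"
  have "j = i + p" using ij(1) p_def by simp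
  then have "?orb j = (?f ^^ i) (?orb p)" by (simp add: funpow_add)
  then have period: "?orb p = x"
    using ij(3) funpow_cw_next_inj[OF S x funpow_cw_next_in[OF S x]] by metis
  have "S \<subseteq> ?orb ` {..<p}"
  proof
    fix s assume "s \<in> S"
    then obtain k where "?orb k = s" using funpow_cw_next_onto[OF S x] by blast
    then have "?orb (k mod p) = s" by (simp add: funpow_mod_eq[OF period])
    moreover have "k mod p < p" using ij(1) p_def by simp
    ultimately show "s \<in> ?orb ` {..<p}" by blast
  qed
  then have "card S \<le> p"
    using card_mono[of "?orb ` {..<p}" S] card_image_le[of "{..<p}" ?orb] by simp
  then have "p = card S" using ij p_def by simp
  then show ?thesis using period by simp
qed

lemma funpow_cw_next_mod_card:
  "S \<subseteq> {..<n} \<Longrightarrow> x \<in> S \<Longrightarrow> k mod card S = l mod card S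
   \<Longrightarrow> (cw_next n S ^^ k) x = (cw_next n S ^^ l) x"
  by (metis funpow_mod_eq funpow_cw_next_card)

section \<open>Modules attached to pairs of boundary points\<close>

definition Mpts :: "nat \<Rightarrow> tarc set \<Rightarrow> nat \<Rightarrow> nat \<Rightarrow> tarc option" where
  "Mpts n T q s =
     (if q \<noteq> s then (if s = cw n q then None else Mmod T (Bd q s))
      else (if Pl q \<in> T then Mmod T (Nt q) else Mmod T (Pl q)))"

lemma Mrb_eq_Mpts: "Mrb n T rl bl i j = Mpts n T (rl i) (bl j)"
  unfolding Mrb_def Mpts_def Let_def ..

lemma projective_mod_None [simp]: "projective_mod n T None"
  unfolding projective_mod_def by simp

lemma projective_mod_tau_inv: "a \<in> T \<Longrightarrow> projective_mod n T (Mmod T (tau_inv_arc n a))"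
  unfolding projective_mod_def by blast

section \<open>Triangulations of type I\<close>

locale typeI_triangulation =
  fixes n :: nat and T :: "tarc set"
  assumes n_ge_4: "4 \<le> n" and triangulation: "triangulation n T" and typeI: "typeI n T"
begin

abbreviation "A \<equiv> adj T"
abbreviation "E \<equiv> intE n T"
abbreviation "nx \<equiv> cw_next n (adj T)"
abbreviation "pv \<equiv> cw_prev n (adj T)"
abbreviation "C \<equiv> colored n T"
abbreviation "R \<equiv> red n T"
abbreviation "B \<equiv> blue n T"
abbreviation "RS \<equiv> run_starts n T"
abbreviation "next_red \<equiv> cw_next n (red n T)"
abbreviation "next_blue \<equiv> cw_next n (blue n T)"

definition gap :: "nat \<Rightarrow> nat" where
  "gap a = cwlen n a (nx a)"

text \<open>For the first vertex a of an internal triangle with third side gamma(a, s), where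
  s = nx a, the point gap_end a is the point tau^-1(s) of the statement.\<close>

definition gap_end :: "nat \<Rightarrow> nat" where
  "gap_end a = ccw n (nx a)"

lemma n_pos: "0 < n"
  using n_ge_4 by simp

lemma arc_valid: "x \<in> T \<Longrightarrow> valid_arc n x"
  using triangulation unfolding triangulation_def by blast

lemma arcs_compat: "x \<in> T \<Longrightarrow> y \<in> T \<Longrightarrow> compat n x y"
  using triangulation unfolding triangulation_def by blast

lemma arc_in_T_if_compat: "valid_arc n x \<Longrightarrow> (\<forall>y\<in>T. compat n x y) \<Longrightarrow> x \<in> T"
  using triangulation unfolding triangulation_def by blast

lemma adj_subset: "A \<subseteq> {..<n}"
  unfolding adj_def using arc_valid by fastforce

lemma adj_less: "a \<in> A \<Longrightarrow> a < n"
  using adj_subset by auto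

lemma adj_arc: "a \<in> A \<Longrightarrow> Pl a \<in> T \<or> Nt a \<in> T"
  unfolding adj_def by simp

text \<open>The type I hypothesis enters only through this lemma.\<close>

lemma punct_arcs_not_at_one_point: "\<not> {x \<in> T. is_punct x} \<subseteq> {Pl a, Nt a}"
proof
  assume sub: "{x \<in> T. is_punct x} \<subseteq> {Pl a, Nt a}"
  then have "card {x \<in> T. is_punct x} \<le> card {Pl a, Nt a}"
    by (intro card_mono) auto
  then have "card {x \<in> T. is_punct x} \<le> 2"
    using card_insert_le_m1[of 2 "{Nt a}" "Pl a"] by simp
  moreover have "q = a" if "Pl q \<in> T" for q
    using sub that by auto
  ultimately show False using typeI unfolding typeI_def by auto
qed

lemma no_plain_and_notched: "\<not> (Pl a \<in> T \<and> Nt b \<in> T)"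
proof
  assume ab: "Pl a \<in> T \<and> Nt b \<in> T"
  then have "a = b" using arcs_compat[of "Pl a" "Nt b"] by simp
  have "x \<in> {Pl a, Nt a}" if "x \<in> T" "is_punct x" for x
    using that ab \<open>a = b\<close> arcs_compat[of x "Pl a"] arcs_compat[of x "Nt b"] by (cases x) auto
  then show False using punct_arcs_not_at_one_point[of a] by blast
qed

lemma two_adjacent: "\<exists>a\<in>A. \<exists>b\<in>A. a \<noteq> b"
proof (rule ccontr)
  assume single: "\<not> ?thesis"
  have "{x \<in> T. is_punct x} \<noteq> {}"
    using typeI unfolding typeI_def by (auto simp del: Collect_empty_eq)
  then obtain x where x: "x \<in> T" "is_punct x" by blast
  then obtain a where "a \<in> A" by (cases x) (auto simp: adj_def)
  then have "y \<in> {Pl a, Nt a}" if "y \<in> T" "is_punct y" for y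
    using that single by (cases y) (auto simp: adj_def)
  then show False using punct_arcs_not_at_one_point[of a] by blast
qed

lemma gap_props:
  assumes a: "a \<in> A"
  shows "0 < gap a" "gap a < n" "nx a = (a + gap a) mod n" "nx a \<in> A"
    and "\<And>j. 0 < j \<Longrightarrow> j < gap a \<Longrightarrow> (a + j) mod n \<notin> A"
proof -
  have an: "a < n" using a adj_less by simp
  define k where "k = (LEAST k. 0 < k \<and> (a + k) mod n \<in> A)"
  note step = cw_next_least[OF adj_subset a an, folded k_def]
  obtain b where b: "b \<in> A" "b \<noteq> a" using two_adjacent by blast
  have bn: "b < n" using b adj_less by simp
  have "k < n"
  proof (rule ccontr)
    assume "\<not> k < n"
    then have "(a + cwlen n a b) mod n \<notin> A"
      using step(4)[of "cwlen n a b"] cwlen_less[OF n_pos, of a b] cwlen_eq_0_iff[OF an bn] b(2)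
      by simp
    then show False using add_cwlen_mod[OF an bn] b(1) by simp
  qed
  then have "gap a = k" unfolding gap_def using step(5) cwlen_add_mod[OF an] by simp
  then show "0 < gap a" "gap a < n" "nx a = (a + gap a) mod n" "nx a \<in> A"
    "\<And>j. 0 < j \<Longrightarrow> j < gap a \<Longrightarrow> (a + j) mod n \<notin> A"
    using step \<open>k < n\<close> by auto
qed

lemma nx_in: "a \<in> A \<Longrightarrow> nx a \<in> A"
  by (rule gap_props(4))

lemma pv_in: "a \<in> A \<Longrightarrow> pv a \<in> A"
  using cw_prev_in[OF adj_subset] adj_less by blast

lemma pv_nx: "a \<in> A \<Longrightarrow> pv (nx a) = a"
  using cw_prev_cw_next[OF adj_subset] .

lemma nx_pv: "a \<in> A \<Longrightarrow> nx (pv a) = a"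
  using cw_next_cw_prev[OF adj_subset] .

lemma nx_inj: "a \<in> A \<Longrightarrow> b \<in> A \<Longrightarrow> nx a = nx b \<Longrightarrow> a = b"
  using cw_next_inj[OF adj_subset] .

lemma nx_neq: "a \<in> A \<Longrightarrow> nx a \<noteq> a"
  using gap_props(1)[of a] cwlen_eq_0_iff[of a n a] adj_less[of a] unfolding gap_def by auto

lemma nx_eq_cw_iff:
  assumes a: "a \<in> A"
  shows "nx a = cw n a \<longleftrightarrow> gap a = 1"
proof
  assume "nx a = cw n a"
  then have "(a + gap a) mod n = (a + 1) mod n" using gap_props(3)[OF a] unfolding cw_def by simp
  then show "gap a = 1"
    using cwlen_add_mod[OF adj_less[OF a] gap_props(2)[OF a]] cwlen_add_mod[OF adj_less[OF a], of 1]
      n_ge_4 by simp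
next
  assume "gap a = 1"
  then show "nx a = cw n a" using gap_props(3)[OF a] unfolding cw_def by simp
qed

lemma intE_iff: "a \<in> E \<longleftrightarrow> a \<in> A \<and> 2 \<le> gap a"
  using nx_eq_cw_iff gap_props(1) unfolding intE_def by fastforce

lemma intE_adj: "a \<in> E \<Longrightarrow> a \<in> A"
  unfolding intE_def by simp

lemma gap_eq_1: "a \<in> A \<Longrightarrow> a \<notin> E \<Longrightarrow> gap a = 1"
  using intE_iff gap_props(1)[of a] by simp

lemma cw_in_adj_gap: "a \<in> A \<Longrightarrow> cw n a \<in> A \<Longrightarrow> gap a = 1"
  using gap_props(1,5)[of a] unfolding cw_def by (metis less_one nat_neq_iff)

lemma gap_end_props:
  assumes a: "a \<in> A"
  shows "gap_end a < n" "cw n (gap_end a) = nx a" "(a + (gap a - 1)) mod n = gap_end a"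
    and "2 \<le> gap a \<Longrightarrow> gap_end a \<notin> A" and "gap a = 1 \<Longrightarrow> gap_end a = a"
proof -
  note gp = gap_props[OF a]
  have an: "a < n" using a adj_less by simp
  show "gap_end a < n" unfolding gap_end_def ccw_def using n_pos by simp
  show "cw n (gap_end a) = nx a" unfolding gap_end_def using cw_ccw adj_less gp(4) by simp
  have "ccw n (nx a) = (a + gap a + (n - 1)) mod n"
    unfolding gp(3) ccw_def using n_pos by (intro mod_add_diff_eq) simp
  also have "a + gap a + (n - 1) = (a + (gap a - 1)) + n" using gp(1) n_pos by simp
  finally show "(a + (gap a - 1)) mod n = gap_end a" unfolding gap_end_def by simp
  then show "2 \<le> gap a \<Longrightarrow> gap_end a \<notin> A" using gp(5)[of "gap a - 1"] by simp
  show "gap a = 1 \<Longrightarrow> gap_end a = a"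
    using \<open>(a + (gap a - 1)) mod n = gap_end a\<close> an by simp
qed

lemma adj_punct_compat: "a \<in> A \<Longrightarrow> Bd q s \<in> T \<Longrightarrow> punct_compat n a q s"
  using adj_arc[of a] arcs_compat[of "Bd q s" "Pl a"] arcs_compat[of "Bd q s" "Nt a"] by auto

lemma adj_punct_compat_gap: "a \<in> A \<Longrightarrow> p \<in> A \<Longrightarrow> punct_compat n p a (nx a)"
  using gap_props(5)[of a "cwlen n a p"] add_cwlen_mod[of a n p] adj_less
  unfolding punct_compat_def gap_def by auto

text \<open>Both endpoints lie outside every arc of T, and no arc at the puncture ends strictly
  between them.\<close>

lemma gap_arc_in_T:
  assumes a: "a \<in> E"
  shows "Bd a (nx a) \<in> T"
proof (rule arc_in_T_if_compat)
  have aA: "a \<in> A" using a intE_adj by simp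
  have an: "a < n" and nn: "nx a < n" using adj_less aA nx_in by auto
  show "valid_arc n (Bd a (nx a))" using a an nn nx_neq[OF aA] unfolding intE_def by auto
  show "\<forall>y\<in>T. compat n (Bd a (nx a)) y"
  proof
    fix y assume y: "y \<in> T"
    show "compat n (Bd a (nx a)) y"
    proof (cases y)
      case (Bd q s)
      have "q < n" "s < n" "q \<noteq> s" using arc_valid[OF y] Bd by auto
      then show ?thesis
        using Bd y an nn nx_neq[OF aA] adj_punct_compat[OF aA] adj_punct_compat[OF nx_in[OF aA]]
        by (simp add: bd_compat_if_punct_compat)
    next
      case (Pl p)
      then show ?thesis using y adj_punct_compat_gap[OF aA] by (simp add: adj_def)
    next
      case (Nt p)
      then show ?thesis using y adj_punct_compat_gap[OF aA] by (simp add: adj_def)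
    qed
  qed
qed

lemma colored_iff: "x \<in> C \<longleftrightarrow> x < n \<and> (x \<in> A \<or> cw n x \<in> A)"
  unfolding colored_def by simp

lemma red_colored: "R \<subseteq> C"
  unfolding red_def by auto

lemma blue_colored: "B \<subseteq> C"
  unfolding blue_def by auto

lemma red_subset: "R \<subseteq> {..<n}"
  using red_colored colored_iff by auto

lemma blue_subset: "B \<subseteq> {..<n}"
  using blue_colored colored_iff by auto

lemma gap_interior_not_colored:
  assumes a: "a \<in> A" and j: "0 < j" "j + 1 < gap a"
  shows "(a + j) mod n \<notin> C"
proof -
  have "cw n ((a + j) mod n) = (a + (j + 1)) mod n"
    using cw_mod[OF n_pos] by (simp add: add.assoc)
  then show ?thesis using gap_props(5)[OF a, of j] gap_props(5)[OF a, of "j + 1"] j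
    unfolding colored_iff by auto
qed

lemma colored_not_adj:
  assumes x: "x \<in> C" "x \<notin> A"
  obtains a where "a \<in> E" "x = gap_end a" "nx a = cw n x"
proof -
  have xn: "x < n" and cx: "cw n x \<in> A" using x colored_iff by auto
  define a where "a = pv (cw n x)"
  have aA: "a \<in> A" using pv_in[OF cx] a_def by simp
  have na: "nx a = cw n x" using nx_pv[OF cx] a_def by simp
  then have "gap_end a = x" using ccw_cw[OF xn] unfolding gap_end_def by simp
  then have "a \<in> E" using aA x(2) gap_end_props(5)[OF aA] gap_eq_1[OF aA] by (cases "a \<in> E") auto
  then show ?thesis using that \<open>gap_end a = x\<close> na by blast
qed

lemma gap_end_colored: "a \<in> A \<Longrightarrow> gap_end a \<in> C"
  using gap_end_props[of a] nx_in[of a] colored_iff by auto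

lemma run_last_vertices_iff: "y \<in> run_last_vertices n T \<longleftrightarrow> (\<exists>p\<in>E. y = nx p \<and> nx p \<notin> E)"
  unfolding run_last_vertices_def by auto

lemma adj_red: assumes a: "a \<in> A" shows "a \<in> R"
proof -
  have "cw n a \<notin> run_last_vertices n T"
  proof
    assume "cw n a \<in> run_last_vertices n T"
    then obtain p where p: "p \<in> E" "cw n a = nx p" "nx p \<notin> E"
      using run_last_vertices_iff by blast
    then have "cw n a \<in> A" using nx_in intE_adj by simp
    then have "nx a = cw n a" using nx_eq_cw_iff[OF a] cw_in_adj_gap[OF a] by simp
    then have "a = p" using nx_inj[OF a intE_adj[OF p(1)]] p(2) by simp
    then show False using p \<open>nx a = cw n a\<close> unfolding intE_def by simp
  qed
  then show ?thesis unfolding red_def using a colored_iff adj_less by auto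
qed

lemma gap_end_red_iff: assumes a: "a \<in> E" shows "gap_end a \<in> R \<longleftrightarrow> nx a \<in> E"
proof -
  have aA: "a \<in> A" using a intE_adj by simp
  have "cw n (gap_end a) \<in> run_last_vertices n T \<longleftrightarrow> nx a \<notin> E"
    unfolding gap_end_props(2)[OF aA] run_last_vertices_iff
    using a nx_inj[OF aA] intE_adj by blast
  then show ?thesis unfolding red_def using gap_end_colored[OF aA] by auto
qed

lemma adj_blue_iff: "a \<in> A \<Longrightarrow> a \<in> B \<longleftrightarrow> a \<notin> RS"
  unfolding blue_def using colored_iff adj_less by auto

lemma gap_end_blue: assumes a: "a \<in> E" shows "gap_end a \<in> B"
proof -
  have aA: "a \<in> A" using a intE_adj by simp
  then have "gap_end a \<notin> A" using gap_end_props(4) a intE_iff[of a] by simp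
  then show ?thesis unfolding blue_def run_starts_def intE_def using gap_end_colored[OF aA] by auto
qed

lemma nx_run_start_iff: "a \<in> A \<Longrightarrow> nx a \<in> RS \<longleftrightarrow> nx a \<in> E \<and> a \<notin> E"
  unfolding run_starts_def using pv_nx by simp

lemma nx_blue: assumes a: "a \<in> E" shows "nx a \<in> B"
  using adj_blue_iff[OF nx_in] nx_run_start_iff intE_adj a
  unfolding run_starts_def by auto

text \<open>The point carrying the blue label b_i when x carries the red label r_i.\<close>

definition blue_mate :: "nat \<Rightarrow> nat" where
  "blue_mate x = (if x \<in> A then gap_end x else cw n x)"

lemma next_red_gap_1:
  assumes a: "a \<in> A" "gap a = 1"
  shows "next_red a = nx a"
proof -
  have "next_red a = (a + 1) mod n"
    by (rule cw_next_eqI) (use a adj_red gap_props(3,4)[OF a(1)] in auto)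
  then show ?thesis using gap_props(3)[OF a(1)] a(2) by simp
qed

lemma next_red_in_run:
  assumes a: "a \<in> E" "nx a \<in> E"
  shows "next_red a = gap_end a"
proof -
  have aA: "a \<in> A" using a intE_adj by simp
  have "next_red a = (a + (gap a - 1)) mod n"
  proof (rule cw_next_eqI)
    show "0 < gap a - 1" using a(1) intE_iff[of a] by simp
    show "(a + (gap a - 1)) mod n \<in> R" using gap_end_props(3)[OF aA] gap_end_red_iff a by simp
    show "(a + j) mod n \<notin> R" if "0 < j" "j < gap a - 1" for j
      using that gap_interior_not_colored[OF aA] red_colored by auto
  qed
  then show ?thesis using gap_end_props(3)[OF aA] by simp
qed

lemma next_red_run_end:
  assumes a: "a \<in> E" "nx a \<notin> E"
  shows "next_red a = nx a"
proof -
  have aA: "a \<in> A" using a intE_adj by simp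
  have "next_red a = (a + gap a) mod n"
  proof (rule cw_next_eqI)
    show "0 < gap a" using gap_props(1)[OF aA] .
    show "(a + gap a) mod n \<in> R" using gap_props(3,4)[OF aA] adj_red by simp
    show "(a + j) mod n \<notin> R" if j: "0 < j" "j < gap a" for j
    proof (cases "j + 1 < gap a")
      case True then show ?thesis using gap_interior_not_colored[OF aA j(1)] red_colored by auto
    next
      case False
      then have "j = gap a - 1" using j by simp
      then show ?thesis using gap_end_props(3)[OF aA] gap_end_red_iff a by simp
    qed
  qed
  then show ?thesis using gap_props(3)[OF aA] by simp
qed

lemma next_red_gap_end:
  assumes a: "a \<in> E"
  shows "next_red (gap_end a) = nx a"
proof -
  have aA: "a \<in> A" using a intE_adj by simp
  have "next_red (gap_end a) = (gap_end a + 1) mod n"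
    by (rule cw_next_eqI)
      (use gap_end_props(2)[OF aA] nx_in[OF aA] adj_red in \<open>auto simp: cw_def\<close>)
  then show ?thesis using gap_end_props(2)[OF aA] by (simp add: cw_def)
qed

lemma next_blue_gap_1:
  assumes a: "a \<in> A" "gap a = 1" "nx a \<notin> E"
  shows "next_blue a = nx a"
proof -
  have "next_blue a = (a + 1) mod n"
    by (rule cw_next_eqI)
      (use a adj_blue_iff[OF nx_in[OF a(1)]] gap_props(3)[OF a(1)] in \<open>auto simp: run_starts_def\<close>)
  then show ?thesis using gap_props(3)[OF a(1)] a(2) by simp
qed

text \<open>Here b = nx a starts a run of internal triangles, so b itself is not blue.\<close>

lemma next_blue_run_start:
  assumes a: "a \<in> A" "gap a = 1" "nx a \<in> E"
  shows "next_blue a = gap_end (nx a)"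
proof -
  define b where "b = nx a"
  have bA: "b \<in> A" using nx_in[OF a(1)] b_def by simp
  have shift: "(b + t) mod n = (a + (1 + t)) mod n" for t
    using gap_props(3)[OF a(1)] a(2) b_def by (simp add: mod_add_left_eq add.assoc)
  have "next_blue a = (a + gap b) mod n"
  proof (rule cw_next_eqI)
    show "0 < gap b" using gap_props(1)[OF bA] .
    show "(a + gap b) mod n \<in> B"
      using gap_end_blue[of b] a(3) b_def shift[of "gap b - 1"] gap_end_props(3)[OF bA]
        gap_props(1)[OF bA] by simp
    show "(a + j) mod n \<notin> B" if j: "0 < j" "j < gap b" for j
    proof (cases "j = 1")
      case True
      have "a \<notin> E" using a(2) intE_iff[of a] by simp
      then have "b \<notin> B" using nx_run_start_iff[OF a(1)] a(3) adj_blue_iff[OF bA] b_def by simp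
      then show ?thesis using True shift[of 0] adj_less[OF bA] by simp
    next
      case False
      then have "(b + (j - 1)) mod n \<notin> C" using gap_interior_not_colored[OF bA, of "j - 1"] j by simp
      then show ?thesis using shift[of "j - 1"] False j blue_colored by auto
    qed
  qed
  also have "\<dots> = gap_end b"
    using shift[of "gap b - 1"] gap_end_props(3)[OF bA] gap_props(1)[OF bA] by simp
  finally show ?thesis using b_def by simp
qed

lemma next_blue_gap_end:
  assumes a: "a \<in> E"
  shows "next_blue (gap_end a) = nx a"
proof -
  have aA: "a \<in> A" using a intE_adj by simp
  have "next_blue (gap_end a) = (gap_end a + 1) mod n"
    by (rule cw_next_eqI) (use gap_end_props(2)[OF aA] nx_blue[OF a] in \<open>auto simp: cw_def\<close>)
  then show ?thesis using gap_end_props(2)[OF aA] by (simp add: cw_def)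
qed

lemma next_blue_internal:
  assumes a: "a \<in> E"
  shows "next_blue a = gap_end a"
proof -
  have aA: "a \<in> A" using a intE_adj by simp
  have "next_blue a = (a + (gap a - 1)) mod n"
  proof (rule cw_next_eqI)
    show "0 < gap a - 1" using a intE_iff[of a] by simp
    show "(a + (gap a - 1)) mod n \<in> B" using gap_end_props(3)[OF aA] gap_end_blue[OF a] by simp
    show "(a + j) mod n \<notin> B" if "0 < j" "j < gap a - 1" for j
      using that gap_interior_not_colored[OF aA] blue_colored by auto
  qed
  then show ?thesis using gap_end_props(3)[OF aA] by simp
qed

lemma blue_mate_gap_1: "a \<in> A \<Longrightarrow> a \<notin> E \<Longrightarrow> blue_mate a = a"
  using gap_end_props(5) gap_eq_1 unfolding blue_mate_def by simp

lemma next_blue_blue_mate: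
  assumes x: "x \<in> R"
  shows "next_blue (blue_mate x) = blue_mate (next_red x)"
proof (cases "x \<in> A")
  case xA: True
  show ?thesis
  proof (cases "x \<in> E")
    case False
    then have gap: "gap x = 1" using gap_eq_1 xA by simp
    show ?thesis
    proof (cases "nx x \<in> E")
      case True
      then show ?thesis
        using blue_mate_gap_1[OF xA False] next_red_gap_1[OF xA gap] next_blue_run_start[OF xA gap True]
          nx_in[OF xA] unfolding blue_mate_def by simp
    next
      case False
      then show ?thesis
        using blue_mate_gap_1[OF xA \<open>x \<notin> E\<close>] blue_mate_gap_1[OF nx_in[OF xA] False]
          next_red_gap_1[OF xA gap] next_blue_gap_1[OF xA gap False] by simp
    qed
  next
    case xE: True
    show ?thesis
    proof (cases "nx x \<in> E")
      case True
      then show ?thesis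
        using next_red_in_run[OF xE True] next_blue_gap_end[OF xE] gap_end_props(2,4)[OF xA] xE
          intE_iff[of x] intE_iff[of "nx x"] nx_in[OF xA] unfolding blue_mate_def by simp
    next
      case False
      then show ?thesis
        using next_red_run_end[OF xE False] next_blue_gap_end[OF xE] blue_mate_gap_1[OF nx_in[OF xA] False]
          xA by (simp add: blue_mate_def)
    qed
  qed
next
  case False
  obtain a where a: "a \<in> E" "x = gap_end a" "nx a = cw n x"
    using colored_not_adj[OF _ False] x red_colored by blast
  have "nx a \<in> E" using gap_end_red_iff a x by simp
  then show ?thesis
    using next_red_gap_end[OF a(1)] a False next_blue_internal intE_adj unfolding blue_mate_def by simp
qed

lemma projective_gap_arc_shift:
  assumes b: "b \<in> E"
  shows "projective_mod n T (Mpts n T (ccw n b) (gap_end b))"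
proof -
  have bA: "b \<in> A" using b intE_adj by simp
  have "ccw n b \<noteq> gap_end b"
    using ccw_inj[of b n "nx b"] adj_less[OF bA] adj_less[OF nx_in[OF bA]] nx_neq[OF bA]
    unfolding gap_end_def by auto
  moreover have "gap_end b \<noteq> cw n (ccw n b)"
    using cw_ccw[OF adj_less[OF bA]] gap_end_props(4)[OF bA] b intE_iff[of b] bA by auto
  ultimately have "Mpts n T (ccw n b) (gap_end b) = Mmod T (tau_inv_arc n (Bd b (nx b)))"
    unfolding Mpts_def gap_end_def by simp
  then show ?thesis using projective_mod_tau_inv[OF gap_arc_in_T[OF b]] by simp
qed

lemma projective_next_blue_mate:
  assumes x: "x \<in> R"
  shows "projective_mod n T (Mpts n T x (next_blue (blue_mate x)))"
proof (cases "x \<in> A")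
  case xA: True
  show ?thesis
  proof (cases "x \<in> E")
    case False
    then have gap: "gap x = 1" using gap_eq_1 xA by simp
    have nx_cw: "nx x = cw n x" using nx_eq_cw_iff[OF xA] gap by simp
    show ?thesis
    proof (cases "nx x \<in> E")
      case True
      have "ccw n (nx x) = x" using nx_cw ccw_cw adj_less[OF xA] by simp
      then show ?thesis
        using projective_gap_arc_shift[OF True] blue_mate_gap_1[OF xA False]
          next_blue_run_start[OF xA gap True] by simp
    next
      case False
      then show ?thesis
        using blue_mate_gap_1[OF xA \<open>x \<notin> E\<close>] next_blue_gap_1[OF xA gap False] nx_cw
          cw_neq[of n x] n_ge_4 adj_less[OF xA] unfolding Mpts_def by simp
    qed
  next
    case xE: True
    have "next_blue (blue_mate x) = nx x"
      using next_blue_gap_end[OF xE] xA unfolding blue_mate_def by simp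
    moreover have "nx x \<noteq> x" "nx x \<noteq> cw n x" using nx_neq[OF xA] xE unfolding intE_def by auto
    ultimately show ?thesis
      using gap_arc_in_T[OF xE] unfolding Mpts_def Mmod_def by simp
  qed
next
  case False
  obtain a where a: "a \<in> E" "x = gap_end a" "nx a = cw n x"
    using colored_not_adj[OF _ False] x red_colored by blast
  have "nx a \<in> E" using gap_end_red_iff a x by simp
  moreover have "next_blue (blue_mate x) = gap_end (nx a)"
    using False a next_blue_internal[OF \<open>nx a \<in> E\<close>] unfolding blue_mate_def by simp
  moreover have "x = ccw n (nx a)" using a unfolding gap_end_def by simp
  ultimately show ?thesis using projective_gap_arc_shift by simp
qed

text \<open>At a point x with gap 1 both x and cw n x are adjacent to the puncture, and since T
  does not mix tags the two arcs at them carry the same tag; so the module is P of the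
  arc at cw n x.\<close>

lemma projective_punct_mate:
  assumes xA: "x \<in> A" and gap: "gap x = 1"
  shows "projective_mod n T (Mpts n T x x)"
proof -
  have xn: "x < n" using adj_less[OF xA] .
  have cA: "cw n x \<in> A" using nx_eq_cw_iff[OF xA] gap nx_in[OF xA] by simp
  show ?thesis
  proof (cases "Pl x \<in> T")
    case True
    then have "Pl (cw n x) \<in> T" "Nt x \<notin> T"
      using adj_arc[OF cA] no_plain_and_notched by blast+
    then show ?thesis
      using True projective_mod_tau_inv[where a = "Pl (cw n x)" and n = n] ccw_cw[OF xn]
      unfolding Mpts_def by simp
  next
    case False
    then have "Nt (cw n x) \<in> T"
      using adj_arc[OF xA] adj_arc[OF cA] no_plain_and_notched by blast
    then show ?thesis
      using False projective_mod_tau_inv[where a = "Nt (cw n x)" and n = n] ccw_cw[OF xn]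
      unfolding Mpts_def by simp
  qed
qed

lemma projective_or_gap_arc_blue_mate:
  assumes x: "x \<in> R"
  shows "projective_mod n T (Mpts n T x (blue_mate x))
     \<or> (\<exists>q\<in>E. Bd q (nx q) \<in> T \<and> Mpts n T x (blue_mate x) = Mmod T (Bd q (ccw n (nx q))))"
proof (cases "x \<in> A")
  case xA: True
  show ?thesis
  proof (cases "x \<in> E")
    case False
    then show ?thesis
      using projective_punct_mate[OF xA gap_eq_1[OF xA False]] blue_mate_gap_1[OF xA False] by simp
  next
    case xE: True
    have "gap_end x \<noteq> x" using gap_end_props(4)[OF xA] xE intE_iff[of x] xA by auto
    moreover have "gap_end x \<noteq> cw n x \<Longrightarrow> Mpts n T x (blue_mate x) = Mmod T (Bd x (ccw n (nx x)))"
      using calculation xA unfolding Mpts_def blue_mate_def gap_end_def by simp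
    ultimately show ?thesis
      using xE gap_arc_in_T[OF xE] xA unfolding Mpts_def blue_mate_def by auto
  qed
next
  case False
  have "x < n" using x red_subset by auto
  then show ?thesis using False cw_neq[of n x] n_ge_4 unfolding Mpts_def blue_mate_def by simp
qed

lemma gap_end_inj: "inj_on gap_end E"
proof
  fix a b assume a: "a \<in> E" and b: "b \<in> E" and "gap_end a = gap_end b"
  then have "ccw n (nx a) = ccw n (nx b)" by (simp add: gap_end_def)
  then have "nx a = nx b" using ccw_inj adj_less nx_in intE_adj a b by metis
  then show "a = b" using nx_inj intE_adj a b by simp
qed

lemma blue_eq: "B = (A - RS) \<union> gap_end ` E"
proof
  show "B \<subseteq> (A - RS) \<union> gap_end ` E"
  proof
    fix x assume x: "x \<in> B"
    show "x \<in> (A - RS) \<union> gap_end ` E"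
    proof (cases "x \<in> A")
      case True then show ?thesis using x adj_blue_iff by simp
    next
      case False
      then obtain a where "a \<in> E" "x = gap_end a"
        using colored_not_adj x blue_colored by blast
      then show ?thesis by simp
    qed
  qed
  show "(A - RS) \<union> gap_end ` E \<subseteq> B"
    using adj_blue_iff gap_end_blue by auto
qed

lemma card_blue: "card B = NN n T"
proof -
  have fin: "finite A" using adj_subset finite_subset by blast
  have E_A: "E \<subseteq> A" using intE_adj by blast
  have RS_E: "RS \<subseteq> E" unfolding run_starts_def by blast
  have "gap_end a \<notin> A" if "a \<in> E" for a
    using that gap_end_props(4) intE_iff[of a] by simp
  then have "(A - RS) \<inter> gap_end ` E = {}" by blast
  then have "card B = card (A - RS) + card (gap_end ` E)"
    unfolding blue_eq using fin E_A by (intro card_Un_disjoint) (auto intro: finite_subset)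
  also have "\<dots> = card A - card RS + card E"
    using card_image[OF gap_end_inj] card_Diff_subset[of RS A] RS_E E_A fin
    by (simp add: finite_subset)
  finally have card: "card B = card A - card RS + card E" .
  have "card RS \<le> card E" "card E \<le> card A"
    using card_mono fin E_A RS_E finite_subset by metis+
  moreover have "E = A \<Longrightarrow> RS = {}"
    using pv_in unfolding run_starts_def by auto
  ultimately show ?thesis using card unfolding NN_def dval_def by auto
qed

lemma funpow_next_red_blue_mate:
  assumes x: "x \<in> R"
  shows "(next_red ^^ k) x \<in> R \<and> blue_mate ((next_red ^^ k) x) = (next_blue ^^ k) (blue_mate x)"
proof (induction k)
  case 0 then show ?case using x by simp
next
  case (Suc k)
  then have y: "(next_red ^^ k) x \<in> R"
    and mate: "blue_mate ((next_red ^^ k) x) = (next_blue ^^ k) (blue_mate x)" by simp_all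
  have "next_red ((next_red ^^ k) x) \<in> R" using cw_next_in[OF red_subset y] red_subset y by auto
  moreover have "blue_mate (next_red ((next_red ^^ k) x)) = next_blue ((next_blue ^^ k) (blue_mate x))"
    using next_blue_blue_mate[OF y] mate by simp
  ultimately show ?case by simp
qed

text \<open>In each of the three cases of the labelling, b_1 sits on the blue mate of the point
  labelled r_1.\<close>

lemma labelling_start:
  assumes "if E = {} then rs = bs \<and> rs \<in> R \<inter> B \<and> kb = 1
           else if E = A then rs = bs \<and> rs \<in> R \<inter> B \<and> kb = NN n T
           else (\<exists>q\<in>RS. rs = ccw n q \<and> bs = ccw n q \<and> kb = 1)"
  obtains c0 where "rs \<in> R" "bs \<in> B" "blue_mate rs = (next_blue ^^ c0) bs"
    and "\<And>j. 1 \<le> j \<Longrightarrow> (j + NN n T - kb) mod NN n T = (j - 1 + c0) mod NN n T"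
proof (cases "E = {}")
  case True
  then have start: "rs = bs" "rs \<in> R" "rs \<in> B" "kb = 1" using assms by auto
  have "rs \<in> A" using colored_not_adj start red_colored True by blast
  then have "blue_mate rs = (next_blue ^^ 0) bs" using blue_mate_gap_1 True start by simp
  then show ?thesis using start add_diff_1_mod by (intro that[of 0]) auto
next
  case nonempty: False
  show ?thesis
  proof (cases "E = A")
    case True
    then have start: "rs = bs" "rs \<in> R" "rs \<in> B" "kb = NN n T" using assms nonempty by auto
    have "blue_mate rs = next_blue rs"
    proof (cases "rs \<in> A")
      case True
      then show ?thesis using next_blue_internal \<open>E = A\<close> unfolding blue_mate_def by simp
    next
      case False
      obtain a where "a \<in> E" "rs = gap_end a" "nx a = cw n rs"
        using colored_not_adj[OF _ False] start red_colored by blast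
      then show ?thesis using next_blue_gap_end False unfolding blue_mate_def by simp
    qed
    then have "blue_mate rs = (next_blue ^^ 1) bs" using start by simp
    moreover have "(j + NN n T - kb) mod NN n T = (j - 1 + 1) mod NN n T" if "1 \<le> j" for j
      using that start by simp
    ultimately show ?thesis using start by (intro that[of 1]) auto
  next
    case False
    then obtain q where q: "q \<in> RS" "rs = ccw n q" "bs = ccw n q" "kb = 1"
      using assms nonempty by auto
    have qA: "q \<in> A" and pE: "pv q \<notin> E" using q(1) intE_adj unfolding run_starts_def by auto
    define p where "p = pv q"
    have pA: "p \<in> A" using pv_in[OF qA] p_def by simp
    have "q = cw n p" using nx_pv[OF qA] nx_eq_cw_iff[OF pA] gap_eq_1[OF pA] pE p_def by simp
    then have "rs = p" "bs = p" using q ccw_cw adj_less[OF pA] by auto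
    moreover have "p \<in> B" using adj_blue_iff[OF pA] pE p_def unfolding run_starts_def by simp
    moreover have "blue_mate p = (next_blue ^^ 0) p" using blue_mate_gap_1[OF pA] pE p_def by simp
    ultimately show ?thesis using adj_red[OF pA] q(4) add_diff_1_mod by (intro that[of 0]) auto
  qed
qed

lemma labelling_orbits:
  assumes "labelling n T rl bl"
  obtains rs bs c0 where "rs \<in> R" "bs \<in> B" "blue_mate rs = (next_blue ^^ c0) bs"
    and "\<And>j. j \<in> {1..NN n T} \<Longrightarrow> rl j = (next_red ^^ (j - 1)) rs"
    and "\<And>j. j \<in> {1..NN n T} \<Longrightarrow> bl j = (next_blue ^^ (j - 1 + c0)) bs"
proof -
  define N where "N = NN n T"
  obtain rs bs kb where
    labels: "\<forall>j\<in>{1..N}. rl j = (next_red ^^ ((j + N - 1) mod N)) rs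
                    \<and> bl j = (next_blue ^^ ((j + N - kb) mod N)) bs"
    and start: "if E = {} then rs = bs \<and> rs \<in> R \<inter> B \<and> kb = 1
           else if E = A then rs = bs \<and> rs \<in> R \<inter> B \<and> kb = N
           else (\<exists>q\<in>RS. rs = ccw n q \<and> bs = ccw n q \<and> kb = 1)"
    using assms unfolding labelling_def Let_def N_def by (elim exE conjE)
  obtain c0 where rs: "rs \<in> R" and bs: "bs \<in> B" and mate: "blue_mate rs = (next_blue ^^ c0) bs"
    and shift: "\<And>j. 1 \<le> j \<Longrightarrow> (j + N - kb) mod N = (j - 1 + c0) mod N"
    using labelling_start[OF start[unfolded N_def]] unfolding N_def by blast
  have "rl j = (next_red ^^ (j - 1)) rs" if "j \<in> {1..N}" for j
  proof -
    have "rl j = (next_red ^^ ((j + N - 1) mod N)) rs" using labels that by blast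
    moreover have "(j + N - 1) mod N = j - 1" using that add_diff_1_mod[of j N] by auto
    ultimately show ?thesis by simp
  qed
  moreover have "bl j = (next_blue ^^ (j - 1 + c0)) bs" if "j \<in> {1..N}" for j
  proof -
    have "bl j = (next_blue ^^ ((j + N - kb) mod N)) bs" using labels that by blast
    also have "\<dots> = (next_blue ^^ (j - 1 + c0)) bs"
      using shift[of j] that card_blue unfolding N_def
      by (intro funpow_cw_next_mod_card[OF blue_subset bs]) simp
    finally show ?thesis .
  qed
  ultimately show ?thesis using that rs bs mate unfolding N_def by blast
qed

lemma labelling_blue_mate:
  assumes L: "labelling n T rl bl" and i: "i \<in> {1..NN n T}"
  shows "rl i \<in> R" "bl i = blue_mate (rl i)"
    and "bl (i mod NN n T + 1) = next_blue (blue_mate (rl i))"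
proof -
  obtain rs bs c0 where rs: "rs \<in> R" and bs: "bs \<in> B" and mate: "blue_mate rs = (next_blue ^^ c0) bs"
    and red_label: "\<And>j. j \<in> {1..NN n T} \<Longrightarrow> rl j = (next_red ^^ (j - 1)) rs"
    and blue_label: "\<And>j. j \<in> {1..NN n T} \<Longrightarrow> bl j = (next_blue ^^ (j - 1 + c0)) bs"
    using labelling_orbits[OF L] by blast
  note iter = funpow_next_red_blue_mate[OF rs, of "i - 1"]
  show "rl i \<in> R" using iter red_label[OF i] by simp
  have "(next_blue ^^ (i - 1 + c0)) bs = (next_blue ^^ (i - 1)) ((next_blue ^^ c0) bs)"
    by (simp only: funpow_add o_apply)
  then show bl_i: "bl i = blue_mate (rl i)"
    using blue_label[OF i] iter red_label[OF i] mate by simp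
  have "bl (i mod NN n T + 1) = (next_blue ^^ (i mod NN n T + c0)) bs"
    using blue_label[of "i mod NN n T + 1"] i by (simp add: Suc_leI)
  also have "\<dots> = (next_blue ^^ Suc (i - 1 + c0)) bs"
    using i card_blue by (intro funpow_cw_next_mod_card[OF blue_subset bs]) (simp add: mod_add_left_eq)
  also have "\<dots> = next_blue ((next_blue ^^ (i - 1 + c0)) bs)"
    by (simp only: funpow.simps(2) o_apply)
  finally show "bl (i mod NN n T + 1) = next_blue (blue_mate (rl i))"
    using blue_label[OF i] bl_i by simp
qed

end

theorem lemma5p6:
  fixes n :: nat and T :: "tarc set" and rl bl :: "nat \<Rightarrow> nat" and i :: nat
  assumes "n \<ge> 4"
    and "triangulation n T"
    and "typeI n T"
    and "labelling n T rl bl"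
    and "i \<in> {1..NN n T}"
  shows "projective_mod n T (Mrb n T rl bl i (i mod NN n T + 1))
       \<and> (projective_mod n T (Mrb n T rl bl i i)
          \<or> (\<exists>q\<in>intE n T. Bd q (cw_next n (adj T) q) \<in> T
               \<and> Mrb n T rl bl i i = Mmod T (Bd q (ccw n (cw_next n (adj T) q)))))"
proof -
  interpret typeI_triangulation n T
    using assms(1-3) by unfold_locales
  note labels = labelling_blue_mate[OF assms(4,5)]
  show ?thesis
    unfolding Mrb_eq_Mpts labels(2,3)
    using projective_next_blue_mate[OF labels(1)] projective_or_gap_arc_blue_mate[OF labels(1)]
    by simp
qed

end
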